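(* Let $m_1,m_2\geq 1$, $m=m_1+m_2$, $j=\mathrm{diag}(I_{m_1},-I_{m_2})$, and let $\{C_k\}_{k\geq 0}$ be a sequence of $m\times m$ matrices with $C_k>0$ and $C_kjC_k=j$ for all $k\geq 0$. Then the discrete Dirac system $y_{k+1}(z)=(I_m+\mathrm{i} z jC_k)y_k(z)$ $(k\geq 0)$ has a unique Weyl function $\varphi$, and this Weyl function is analytic and contractive (i.e. $\varphi(z)^*\varphi(z)\leq I_{m_2}$) on the open lower half-plane $\mathbb{C}_-$.
   Context: The fundamental solution $\{W_k(z)\}$ of the system is defined by $W_0(z)=I_m$, $W_{k+1}(z)=(I_m+\mathrm{i} z jC_k)W_k(z)$. Put $q(z)=(1+|z|^2)^{-1}$. A Weyl function of the system is an $m_1\times m_2$ matrix function $\varphi$ on $\mathbb{C}_-$ such that for every $z\in\mathbb{C}_-$ the series $\sum_{k=0}^\infty q(z)^k\begin{bmatrix}\varphi(z)^* & I_{m_2}\end{bmatrix}W_k(z)^*C_kW_k(z)\begin{bmatrix}\varphi(z)\\ I_{m_2}\end{bmatrix}$ is finite (converges). *)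

theory Defs
  imports "HOL-Analysis.Analysis"
begin

text \<open>Block index type: rows/columns of an m x m matrix with m = m1 + m2 are indexed by
  'a + 'b, where CARD('a) = m1 and CARD('b) = m2 (both automatically at least 1).\<close>

definition adj :: "complex ^ 'n ^ 'm \<Rightarrow> complex ^ 'm ^ 'n" where
  "adj A = (\<chi> i j. cnj (A $ j $ i))"

definition hermitian :: "complex ^ 'n ^ 'n \<Rightarrow> bool" where
  "hermitian A \<longleftrightarrow> adj A = A"

definition qform :: "complex ^ 'n ^ 'n \<Rightarrow> complex ^ 'n \<Rightarrow> complex" where
  "qform A x = (\<Sum>i\<in>UNIV. cnj (x $ i) * (A *v x) $ i)"

definition pos_def :: "complex ^ 'n ^ 'n \<Rightarrow> bool" where
  "pos_def A \<longleftrightarrow> hermitian A \<and> (\<forall>x. x \<noteq> 0 \<longrightarrow> Re (qform A x) > 0)"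

definition pos_semidef :: "complex ^ 'n ^ 'n \<Rightarrow> bool" where
  "pos_semidef A \<longleftrightarrow> hermitian A \<and> (\<forall>x. Re (qform A x) \<ge> 0)"

definition loewner_le :: "complex ^ 'n ^ 'n \<Rightarrow> complex ^ 'n ^ 'n \<Rightarrow> bool" where
  "loewner_le A B \<longleftrightarrow> pos_semidef (B - A)"

definition jmat :: "complex ^ ('a::finite + 'b::finite) ^ ('a + 'b)" where
  "jmat = (\<chi> r s. if r = s then (case r of Inl _ \<Rightarrow> 1 | Inr _ \<Rightarrow> -1) else 0)"

primrec W :: "(nat \<Rightarrow> complex ^ ('a::finite + 'b::finite) ^ ('a + 'b)) \<Rightarrow> complex \<Rightarrow> nat
               \<Rightarrow> complex ^ ('a + 'b) ^ ('a + 'b)" where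
  "W C z 0 = mat 1"
| "W C z (Suc k) = (mat 1 + mat (\<i> * z) ** jmat ** C k) ** W C z k"

definition q :: "complex \<Rightarrow> real" where
  "q z = 1 / (1 + (cmod z)\<^sup>2)"

definition lower_half_plane :: "complex set" where
  "lower_half_plane = {z. Im z < 0}"

definition stack_id :: "complex ^ 'b ^ 'a \<Rightarrow> complex ^ 'b ^ ('a::finite + 'b::finite)" where
  "stack_id P = (\<chi> r c. case r of Inl i \<Rightarrow> P $ i $ c | Inr i \<Rightarrow> (if i = c then 1 else 0))"

definition is_weyl :: "(nat \<Rightarrow> complex ^ ('a::finite + 'b::finite) ^ ('a + 'b))
                        \<Rightarrow> (complex \<Rightarrow> complex ^ 'b ^ 'a) \<Rightarrow> bool" where
  "is_weyl C \<phi> \<longleftrightarrow> (\<forall>z \<in> lower_half_plane.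
     summable (\<lambda>k. (q z) ^ k *\<^sub>R
        (adj (stack_id (\<phi> z)) ** adj (W C z k) ** C k ** W C z k ** stack_id (\<phi> z))))"

end

theory Submission
  imports Defs "HOL-Complex_Analysis.Cauchy_Integral_Formula"
begin

text \<open>
  Put q = 1 / (1 + |z|^2) and x_k = W_k(z) x. As C_k is Hermitian with C_k j C_k = j, one step of
  the system changes the j-form by

    q^(k+1) x_(k+1)^* j x_(k+1) = q^k x_k^* j x_k - 2 Im z q^(k+1) x_k^* C_k x_k,

  and positivity of C_k gives C_k >= j. For Im z < 0 the sequence q^k x_k^* j x_k is therefore
  increasing, grows geometrically when x^* j x > 0, and its increments are positive multiples of
  the terms of the Weyl series. So convergence of the series for x = [phi; I] v forces
  x^* j x <= 0, i.e. phi^* phi <= I; applied to the difference of two Weyl functions it gives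
  uniqueness.

  For existence, the Weyl discs of all P with q^n x_n^* j x_n <= 0 for every x = [P; I] v are
  nested, and their diameters decay like (1 - 2 Im z q)^(-n/2), locally uniformly in z. Each disc
  contains a matrix that is rational in z, built from the polynomial matrix (1 + z^2)^n W_n(z)^-1.
  These approximants converge locally uniformly to an analytic limit that lies in every disc, and
  membership in the discs bounds the partial sums of the series.
\<close>

lemma sum_UNIV_Plus:
  "(\<Sum>i\<in>(UNIV::('a::finite + 'b::finite) set). f i) = (\<Sum>a\<in>UNIV. f (Inl a)) + (\<Sum>b\<in>UNIV. f (Inr b))"
  by (metis (no_types, lifting) UNIV_Plus_UNIV finite sum.Plus comp_apply sum.cong)

lemma norm_vec_power2: "(norm x)\<^sup>2 = (\<Sum>i\<in>UNIV. (norm (x $ i))\<^sup>2)"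
  by (simp add: norm_vec_def L2_set_def sum_nonneg)

lemma norm_axis_complex [simp]: "norm (axis b (1::complex)) = 1"
proof -
  have "(norm (axis b (1::complex)))\<^sup>2 = (\<Sum>c\<in>UNIV. if c = b then 1 else 0)"
    unfolding norm_vec_power2 axis_def by (rule sum.cong) auto
  then show ?thesis by (simp add: power2_eq_1_iff)
qed

lemma matrix_vector_mult_axis: "(M *v axis b 1) $ a = M $ a $ b"
proof -
  have "(M *v axis b 1) $ a = (\<Sum>c\<in>UNIV. if c = b then M $ a $ b else 0)"
    unfolding matrix_vector_mult_def vec_lambda_beta axis_def by (rule sum.cong) auto
  then show ?thesis by simp
qed

lemma norm_entry_le:
  fixes M :: "complex ^ 'n ^ 'm"
  shows "norm (M $ a $ b) \<le> norm (M *v axis b 1)"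
proof -
  have "norm ((M *v axis b 1) $ a) \<le> norm (M *v axis b 1)" by (rule Finite_Cartesian_Product.norm_nth_le)
  then show ?thesis by (simp add: matrix_vector_mult_axis)
qed

lemma mat_mult_vec: "mat c *v v = c *s v"
  by (simp add: matrix_vector_mult_def mat_def vec_eq_iff if_distrib if_distribR sum.delta cong: if_cong)

definition cinner :: "complex ^ 'n \<Rightarrow> complex ^ 'n \<Rightarrow> complex" where
  "cinner x y = (\<Sum>i\<in>UNIV. cnj (x $ i) * y $ i)"

lemma cinner_add_right: "cinner x (y + w) = cinner x y + cinner x w"
  by (simp add: cinner_def distrib_left sum.distrib)

lemma cinner_add_left: "cinner (y + w) x = cinner y x + cinner w x"
  by (simp add: cinner_def distrib_right sum.distrib)

lemma cinner_diff_right: "cinner x (y - w) = cinner x y - cinner x w"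
  by (simp add: cinner_def right_diff_distrib sum_subtractf)

lemma cinner_diff_left: "cinner (y - w) x = cinner y x - cinner w x"
  by (simp add: cinner_def left_diff_distrib sum_subtractf)

lemma cinner_scale_right: "cinner x (c *s y) = c * cinner x y"
  by (simp add: cinner_def sum_distrib_left mult_ac)

lemma cinner_scale_left: "cinner (c *s x) y = cnj c * cinner x y"
  by (simp add: cinner_def sum_distrib_left mult_ac)

lemma cinner_commute: "cinner y x = cnj (cinner x y)"
  by (simp add: cinner_def mult_ac)

lemma cnj_mult_self: "cnj z * z = of_real ((cmod z)\<^sup>2)"
  by (metis complex_norm_square mult.commute of_real_power)

lemma cinner_self: "cinner x x = of_real ((norm x)\<^sup>2)"
  unfolding cinner_def norm_vec_power2 of_real_sum
  by (rule sum.cong) (simp_all add: cnj_mult_self)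

lemma adj_adj [simp]: "adj (adj A) = A"
  by (simp add: adj_def vec_eq_iff)

lemma adj_diff: "adj (A - B) = adj A - adj B"
  by (simp add: adj_def vec_eq_iff)

lemma adj_mult: "adj (A ** B) = adj B ** adj A"
  by (simp add: adj_def vec_eq_iff matrix_matrix_mult_def mult.commute)

lemma adj_mat_1: "adj (mat 1) = mat 1"
  by (simp add: adj_def vec_eq_iff mat_def)

lemma cinner_adj_right: "cinner x (A *v y) = cinner (adj A *v x) y"
proof -
  have "cinner x (A *v y) = (\<Sum>i\<in>UNIV. \<Sum>j\<in>UNIV. cnj (x $ i) * A $ i $ j * y $ j)"
    by (simp add: cinner_def matrix_vector_mult_def sum_distrib_left mult_ac)
  also have "\<dots> = (\<Sum>j\<in>UNIV. \<Sum>i\<in>UNIV. cnj (x $ i) * A $ i $ j * y $ j)"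
    by (rule sum.swap)
  also have "\<dots> = cinner (adj A *v x) y"
    by (simp add: cinner_def matrix_vector_mult_def adj_def sum_distrib_right sum_distrib_left mult_ac)
  finally show ?thesis .
qed

lemma cinner_adj_left: "cinner (A *v x) y = cinner x (adj A *v y)"
  by (metis adj_adj cinner_adj_right)

lemma hermitian_cinner: "hermitian A \<Longrightarrow> cinner (A *v x) y = cinner x (A *v y)"
  by (simp add: hermitian_def cinner_adj_left)

lemma hermitian_cinner_cnj: "hermitian A \<Longrightarrow> cnj (cinner x (A *v x)) = cinner x (A *v x)"
  by (metis cinner_commute hermitian_cinner)

lemma hermitian_cinner_Im:
  assumes "hermitian A"
  shows "Im (cinner x (A *v x)) = 0"
  using arg_cong[where f = Im, OF hermitian_cinner_cnj[OF assms]] by simp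

lemma qform_eq_cinner: "qform A x = cinner x (A *v x)"
  by (simp add: qform_def cinner_def)

lemma qform_scaleR: "qform (r *\<^sub>R M) v = of_real r * qform M v"
  unfolding qform_def matrix_vector_mult_def vec_lambda_beta vector_scaleR_component
  by (simp add: scaleR_conv_of_real sum_distrib_left algebra_simps)

lemma qform_sandwich:
  "qform (adj X ** adj V ** M ** V ** X) v = cinner (V *v (X *v v)) (M *v (V *v (X *v v)))"
  by (simp add: qform_eq_cinner cinner_adj_left flip: matrix_vector_mul_assoc)

lemma cinner_parallelogram:
  "cinner (a + b) (M *v (a + b)) + cinner (a - b) (M *v (a - b))
     = 2 * cinner a (M *v a) + 2 * cinner b (M *v b)"
  by (simp add: matrix_vector_right_distrib matrix_vector_mult_diff_distrib cinner_add_left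
      cinner_add_right cinner_diff_left cinner_diff_right algebra_simps)

lemma pos_def_cinner_nonneg: "pos_def M \<Longrightarrow> Re (cinner x (M *v x)) \<ge> 0"
  by (cases "x = 0") (auto simp: pos_def_def qform_eq_cinner cinner_def less_imp_le)

lemma matrix_entry_polarization:
  fixes M :: "complex ^ 'n ^ 'n"
  shows "M $ i $ j = (qform M (axis i 1 + axis j 1) - qform M (axis i 1 - axis j 1)) / 4
     - \<i> * (qform M (axis i 1 + \<i> *s axis j 1) - qform M (axis i 1 - \<i> *s axis j 1)) / 4"
proof -
  have polar: "cinner x (M *v y) = (qform M (x + y) - qform M (x - y)) / 4
     - \<i> * (qform M (x + \<i> *s y) - qform M (x - \<i> *s y)) / 4" for x y :: "complex ^ 'n"
    by (simp add: qform_eq_cinner matrix_vector_right_distrib matrix_vector_mult_diff_distrib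
        vector_scalar_commute cinner_add_left cinner_add_right cinner_diff_left cinner_diff_right
        cinner_scale_left cinner_scale_right algebra_simps) (simp add: field_simps)
  have "cinner (axis i 1) (M *v axis j 1) = (\<Sum>c\<in>UNIV. if c = i then (M *v axis j 1) $ i else 0)"
    unfolding cinner_def axis_def by (rule sum.cong) auto
  with polar[of "axis i 1" "axis j 1"] show ?thesis by (simp add: matrix_vector_mult_axis)
qed

lemma summable_qform:
  fixes f :: "nat \<Rightarrow> complex ^ 'n ^ 'n"
  assumes "summable f"
  shows "summable (\<lambda>k. qform (f k) v)"
proof -
  have eq: "qform (f k) v = (\<Sum>i\<in>UNIV. \<Sum>j\<in>UNIV. cnj (v $ i) * (f k $ i $ j * v $ j))" for k
    by (simp add: qform_def matrix_vector_mult_def sum_distrib_left)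
  have "summable (\<lambda>k. f k $ i $ j)" for i j
    by (intro summable_vec_nth assms)
  then show ?thesis
    unfolding eq by (intro summable_sum summable_mult summable_mult2) auto
qed

lemma summable_matrixI:
  fixes f :: "nat \<Rightarrow> complex ^ 'n ^ 'm"
  assumes "\<And>i j. summable (\<lambda>k. f k $ i $ j)"
  shows "summable f"
proof -
  have "(\<lambda>n. \<Sum>k<n. f k) \<longlonglongrightarrow> (\<chi> i j. suminf (\<lambda>k. f k $ i $ j))"
    by (intro vec_tendstoI) (simp add: summable_LIMSEQ[OF assms])
  then show ?thesis unfolding summable_def sums_def by blast
qed

lemma summable_qform_imp_summable:
  fixes f :: "nat \<Rightarrow> complex ^ 'n ^ 'n"
  assumes "\<And>v. summable (\<lambda>k. qform (f k) v)"
  shows "summable f"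
  by (rule summable_matrixI, subst matrix_entry_polarization)
    (intro summable_diff summable_divide summable_mult assms)

lemma tendsto_matrix_vector_mult:
  fixes A :: "complex ^ 'n ^ 'm"
  assumes "y \<longlonglongrightarrow> l"
  shows "(\<lambda>n. A *v y n) \<longlonglongrightarrow> A *v l"
  unfolding matrix_vector_mult_def
  by (intro tendsto_vec_lambda tendsto_intros tendsto_vec_nth assms)

lemma analytic_on_matrix_mult:
  assumes "\<And>i j. (\<lambda>z. A z $ i $ j) analytic_on S" "\<And>i j. (\<lambda>z. B z $ i $ j) analytic_on S"
  shows "(\<lambda>z. (A z ** B z) $ i $ j) analytic_on S"
  unfolding matrix_matrix_mult_def vec_lambda_beta
  by (intro analytic_on_sum analytic_on_mult assms)

lemma analytic_on_det:
  assumes "\<And>i j. (\<lambda>z. A z $ i $ j) analytic_on S"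
  shows "(\<lambda>z. det (A z)) analytic_on S"
  unfolding det_def by (intro analytic_on_sum analytic_on_mult analytic_on_prod analytic_on_const assms)

lemma matrix_inv_right:
  assumes "invertible A"
  shows "A ** matrix_inv A = mat 1"
  using assms unfolding invertible_def matrix_inv_def by (rule someI2_ex) simp

lemma right_inverse_entry_Cramer:
  fixes G :: "complex ^ 'n ^ 'n"
  assumes "det G \<noteq> 0" and "G ** H = mat 1"
  shows "H $ k $ j = det (\<chi> i l. if l = k then axis j 1 $ i else G $ i $ l) / det G"
proof -
  have "G *v (H *v axis j 1) = axis j 1" by (simp add: matrix_vector_mul_assoc assms(2))
  then have "H *v axis j 1 = (\<chi> k. det (\<chi> i l. if l = k then axis j 1 $ i else G $ i $ l) / det G)"
    using cramer[OF assms(1)] by blast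
  then have "(H *v axis j 1) $ k = det (\<chi> i l. if l = k then axis j 1 $ i else G $ i $ l) / det G"
    by simp
  then show ?thesis by (simp add: matrix_vector_mult_axis)
qed

lemma analytic_on_right_inverse:
  fixes G H :: "complex \<Rightarrow> complex ^ 'n ^ 'n"
  assumes "\<And>i j. (\<lambda>z. G z $ i $ j) analytic_on S"
    and "\<And>z. z \<in> S \<Longrightarrow> det (G z) \<noteq> 0" and "\<And>z. z \<in> S \<Longrightarrow> G z ** H z = mat 1"
    and "open S"
  shows "(\<lambda>z. H z $ k $ j) analytic_on S"
proof -
  let ?Q = "\<lambda>z. det (\<chi> i l. if l = k then axis j 1 $ i else G z $ i $ l) / det (G z)"
  have "?Q analytic_on S"
  proof (intro analytic_on_divide analytic_on_det assms(2))
    show "(\<lambda>z. (\<chi> i l. if l = k then axis j 1 $ i else G z $ i $ l) $ i $ l) analytic_on S" for i l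
      by (cases "l = k") (simp_all add: assms(1))
  qed (simp_all add: assms(1))
  then have "?Q holomorphic_on S" using assms(4) by (simp add: analytic_on_open)
  then have "(\<lambda>z. H z $ k $ j) holomorphic_on S"
    by (rule holomorphic_transform) (simp add: right_inverse_entry_Cramer[OF assms(2,3)])
  then show ?thesis using assms(4) by (simp add: analytic_on_open)
qed

subsection \<open>The signature matrix and the \<open>j\<close>-form\<close>

lemma jmat_mult_vec_nth: "(jmat *v x) $ i = (case i of Inl a \<Rightarrow> x $ i | Inr b \<Rightarrow> - x $ i)"
proof -
  have "(jmat *v x) $ i
      = (\<Sum>s\<in>UNIV. if i = s then (case i of Inl _ \<Rightarrow> 1 | Inr _ \<Rightarrow> -1) * x $ i else 0)"
    unfolding matrix_vector_mult_def vec_lambda_beta by (rule sum.cong) (auto simp: jmat_def)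
  then show ?thesis by (simp split: sum.split)
qed

lemma jmat_mult_jmat: "jmat ** jmat = mat 1"
proof -
  have "(jmat ** jmat) $ r $ s = mat 1 $ r $ s" for r s
  proof -
    have "(jmat ** jmat) $ r $ s = (\<Sum>k\<in>UNIV. if k = r then jmat $ r $ r * jmat $ r $ s else 0)"
      unfolding matrix_matrix_mult_def vec_lambda_beta by (rule sum.cong) (auto simp: jmat_def)
    then show ?thesis by (simp add: jmat_def mat_def split: sum.split)
  qed
  then show ?thesis by (simp only: vec_eq_iff) blast
qed

lemma jmat_jmat_vec [simp]: "jmat *v (jmat *v x) = x"
  by (simp add: matrix_vector_mul_assoc jmat_mult_jmat)

lemma hermitian_jmat: "hermitian jmat"
  by (simp add: hermitian_def adj_def vec_eq_iff jmat_def split: sum.split)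

definition jform :: "complex ^ ('a::finite + 'b::finite) \<Rightarrow> real" where
  "jform x = Re (cinner x (jmat *v x))"

lemma jform_eq:
  "jform x = (\<Sum>a\<in>UNIV. (cmod (x $ Inl a))\<^sup>2) - (\<Sum>b\<in>UNIV. (cmod (x $ Inr b))\<^sup>2)"
proof -
  have "cinner x (jmat *v x)
      = (\<Sum>a\<in>UNIV. cnj (x $ Inl a) * x $ Inl a) + (\<Sum>b\<in>UNIV. - (cnj (x $ Inr b) * x $ Inr b))"
    by (simp add: cinner_def sum_UNIV_Plus jmat_mult_vec_nth)
  also have "\<dots> = of_real ((\<Sum>a\<in>UNIV. (cmod (x $ Inl a))\<^sup>2) - (\<Sum>b\<in>UNIV. (cmod (x $ Inr b))\<^sup>2))"
    by (simp only: cnj_mult_self of_real_sum of_real_diff sum_negf) simp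
  finally show ?thesis by (simp add: jform_def)
qed

lemma tendsto_jform: "y \<longlonglongrightarrow> l \<Longrightarrow> (\<lambda>n. jform (y n)) \<longlonglongrightarrow> jform l"
  unfolding jform_eq by (intro tendsto_intros tendsto_vec_nth)

lemma jform_scale: "jform (c *s x) = (cmod c)\<^sup>2 * jform x"
  by (simp add: jform_eq norm_mult power_mult_distrib sum_distrib_left right_diff_distrib)

lemma step_matrix_mult_vec: "(mat 1 + mat c ** jmat ** M) *v x = x + c *s (jmat *v (M *v x))"
  by (simp add: matrix_vector_mult_add_rdistrib mat_mult_vec flip: matrix_vector_mul_assoc)

text \<open>The factor \<open>1 + |w|\<^sup>2\<close> comes from \<open>j M j M = I\<close>.\<close>
lemma jform_step:
  fixes M :: "complex ^ ('a::finite + 'b::finite) ^ ('a + 'b)"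
  assumes herm: "hermitian M" and MjM: "M ** jmat ** M = jmat"
  shows "jform ((mat 1 + mat (\<i> * w) ** jmat ** M) *v x)
           = (1 + (cmod w)\<^sup>2) * jform x - 2 * Im w * Re (cinner x (M *v x))"
proof -
  define c u a A where "c = \<i> * w" and "u = jmat *v (M *v x)"
    and "a = cinner x (M *v x)" and "A = cinner x (jmat *v x)"
  have ju: "jmat *v u = M *v x" by (simp add: u_def)
  have a_real: "cnj a = a" unfolding a_def using herm by (rule hermitian_cinner_cnj)
  have ux: "cinner u (jmat *v x) = a"
  proof -
    have "cinner u (jmat *v x) = cinner (M *v x) x"
      using hermitian_cinner[OF hermitian_jmat, of "M *v x" "jmat *v x"] by (simp add: u_def)
    also have "\<dots> = cnj a" unfolding a_def by (rule cinner_commute)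
    finally show ?thesis using a_real by simp
  qed
  have uu: "cinner u (jmat *v u) = A"
  proof -
    have "cinner u (jmat *v u) = cinner (jmat *v (M *v x)) (M *v x)"
      by (simp add: ju u_def)
    also have "\<dots> = cinner (M *v x) (jmat *v (M *v x))"
      by (rule hermitian_cinner[OF hermitian_jmat])
    also have "\<dots> = cinner x (M *v (jmat *v (M *v x)))" by (rule hermitian_cinner[OF herm])
    also have "\<dots> = A" by (simp add: A_def matrix_vector_mul_assoc matrix_mul_assoc MjM)
    finally show ?thesis .
  qed
  have xu: "cinner x (jmat *v u) = a" by (simp add: ju a_def)
  have "cinner (x + c *s u) (jmat *v (x + c *s u)) = A + (c + cnj c) * a + cnj c * c * A"
    by (simp add: matrix_vector_right_distrib vector_scalar_commute cinner_add_left cinner_add_right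
        cinner_scale_left cinner_scale_right xu ux uu flip: A_def) (simp add: algebra_simps)
  moreover have "c + cnj c = - 2 * of_real (Im w)" by (simp add: c_def complex_eq_iff)
  moreover have "cnj c * c = of_real ((cmod w)\<^sup>2)"
    using cnj_mult_self[of c] by (simp add: c_def norm_mult)
  ultimately have "jform (x + c *s u) = Re A - 2 * Im w * Re a + (cmod w)\<^sup>2 * Re A"
    using hermitian_cinner_Im[OF herm, of x] by (simp add: jform_def a_def)
  moreover have "(mat 1 + mat (\<i> * w) ** jmat ** M) *v x = x + c *s u"
    by (simp add: step_matrix_mult_vec c_def u_def)
  ultimately show ?thesis
    by (simp add: jform_def A_def a_def algebra_simps)
qed

text \<open>Positive definite solutions of \<open>M j M = j\<close> satisfy \<open>M \<ge> j\<close>: apply positivity to \<open>x - j M x\<close>.\<close>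
lemma jform_le_cinner:
  fixes M :: "complex ^ ('a::finite + 'b::finite) ^ ('a + 'b)"
  assumes pos: "pos_def M" and MjM: "M ** jmat ** M = jmat"
  shows "jform x \<le> Re (cinner x (M *v x))"
proof -
  have herm: "hermitian M" using pos by (simp add: pos_def_def)
  define a A where "a = cinner x (M *v x)" and "A = cinner x (jmat *v x)"
  have a_real: "cnj a = a" unfolding a_def using herm by (rule hermitian_cinner_cnj)
  have t1: "cinner x (M *v (jmat *v (M *v x))) = A"
    by (simp add: A_def matrix_vector_mul_assoc matrix_mul_assoc MjM)
  have t2: "cinner (jmat *v (M *v x)) (M *v x) = A"
    using hermitian_cinner[OF hermitian_jmat, of "M *v x" "M *v x"]
      hermitian_cinner[OF herm, of x "jmat *v (M *v x)"] t1 by simp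
  have t3: "cinner (jmat *v (M *v x)) (M *v (jmat *v (M *v x))) = a"
  proof -
    have "cinner (jmat *v (M *v x)) (M *v (jmat *v (M *v x))) = cinner (jmat *v (M *v x)) (jmat *v x)"
      by (simp add: matrix_vector_mul_assoc matrix_mul_assoc MjM)
    also have "\<dots> = cinner (M *v x) x"
      using hermitian_cinner[OF hermitian_jmat, of "M *v x" "jmat *v x"] by simp
    also have "\<dots> = cnj a" unfolding a_def by (rule cinner_commute)
    finally show ?thesis using a_real by simp
  qed
  define v where "v = x - jmat *v (M *v x)"
  have "cinner v (M *v v) = 2 * a - 2 * A"
    by (simp add: v_def matrix_vector_mult_diff_distrib cinner_diff_left cinner_diff_right
        t1 t2 t3 flip: a_def)
  moreover have "Re (cinner v (M *v v)) \<ge> 0" using pos by (rule pos_def_cinner_nonneg)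
  ultimately show ?thesis by (simp add: jform_def A_def a_def)
qed

lemma step_matrix_inverse:
  fixes M :: "complex ^ ('a::finite + 'b::finite) ^ ('a + 'b)"
  assumes MjM: "M ** jmat ** M = jmat"
  shows "(mat 1 + mat c ** jmat ** M) *v ((mat 1 + mat (- c) ** jmat ** M) *v y) = (1 - c\<^sup>2) *s y"
proof -
  define u where "u = jmat *v (M *v y)"
  have jMu: "jmat *v (M *v u) = y"
    by (simp add: u_def matrix_vector_mul_assoc matrix_mul_assoc MjM jmat_mult_jmat)
  have inner: "(mat 1 + mat (- c) ** jmat ** M) *v y = y - c *s u"
    by (simp add: step_matrix_mult_vec u_def vec_eq_iff)
  have outer: "jmat *v (M *v (y - c *s u)) = u - c *s y"
    by (simp add: matrix_vector_mult_diff_distrib vector_scalar_commute jMu flip: u_def)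
  have "(mat 1 + mat c ** jmat ** M) *v ((mat 1 + mat (- c) ** jmat ** M) *v y)
      = (mat 1 + mat c ** jmat ** M) *v (y - c *s u)"
    by (simp only: inner)
  also have "\<dots> = (y - c *s u) + c *s (jmat *v (M *v (y - c *s u)))"
    by (rule step_matrix_mult_vec)
  also have "\<dots> = (y - c *s u) + c *s (u - c *s y)"
    by (simp only: outer)
  finally show ?thesis
    by (simp add: vec_eq_iff power2_eq_square algebra_simps)
qed

lemma stack_id_mult_vec_Inl: "(stack_id P *v v) $ Inl a = (P *v v) $ a"
  by (simp add: stack_id_def matrix_vector_mult_def)

lemma stack_id_mult_vec_Inr: "(stack_id P *v v) $ Inr b = v $ b"
proof -
  have "(stack_id P *v v) $ Inr b = (\<Sum>c\<in>UNIV. if b = c then v $ c else 0)"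
    unfolding stack_id_def matrix_vector_mult_def vec_lambda_beta by (rule sum.cong) auto
  then show ?thesis by simp
qed

lemma jform_stack_id: "jform (stack_id P *v v) = (norm (P *v v))\<^sup>2 - (norm v)\<^sup>2"
  by (simp add: jform_eq stack_id_mult_vec_Inl stack_id_mult_vec_Inr norm_vec_power2)

lemma contractive_if_jform_stack_id_nonpos:
  assumes "\<And>v. jform (stack_id P *v v) \<le> 0"
  shows "loewner_le (adj P ** P) (mat 1)"
  unfolding loewner_le_def pos_semidef_def
proof
  show "hermitian (mat 1 - adj P ** P)"
    by (simp add: hermitian_def adj_diff adj_mult adj_mat_1)
  show "\<forall>x. 0 \<le> Re (qform (mat 1 - adj P ** P) x)"
  proof
    fix x
    have "qform (mat 1 - adj P ** P) x = cinner x x - cinner (P *v x) (P *v x)"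
      by (simp add: qform_eq_cinner matrix_vector_mult_diff_rdistrib cinner_diff_right
          cinner_adj_left flip: matrix_vector_mul_assoc)
    then show "0 \<le> Re (qform (mat 1 - adj P ** P) x)"
      using assms[of x] by (simp add: cinner_self jform_stack_id)
  qed
qed

lemma q_pos: "q z > 0"
  unfolding q_def by (simp add: add_pos_nonneg)

lemma q_mult_eq_1: "q z * (1 + (cmod z)\<^sup>2) = 1"
  using add_pos_nonneg[OF zero_less_one zero_le_power2[of "cmod z"]] unfolding q_def by simp

definition growth_rate :: "complex \<Rightarrow> real" where
  "growth_rate z = 1 - 2 * Im z * q z"

lemma growth_rate_gt_1: "Im z < 0 \<Longrightarrow> growth_rate z > 1"
  using q_pos[of z] by (simp add: growth_rate_def mult_neg_pos)

lemma Im_cball_lower_half: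
  assumes "Im z0 < 0" and "z \<in> cball z0 (- Im z0 / 2)"
  shows "Im z \<le> Im z0 / 2"
proof -
  have "\<bar>Im (z - z0)\<bar> \<le> - Im z0 / 2"
    using abs_Im_le_cmod[of "z - z0"] assms(2) by (simp add: dist_norm norm_minus_commute)
  then show ?thesis by (simp add: abs_le_iff)
qed

lemma cball_subset_lower_half_plane:
  "Im z0 < 0 \<Longrightarrow> cball z0 (- Im z0 / 2) \<subseteq> lower_half_plane"
  using Im_cball_lower_half by (fastforce simp: lower_half_plane_def)

lemma growth_rate_uniformly_gt_1:
  assumes z0: "Im z0 < 0"
  shows "\<exists>c>1. \<forall>z\<in>cball z0 (- Im z0 / 2). c \<le> growth_rate z"
proof -
  define r D where "r = - Im z0 / 2" and "D = 1 + (cmod z0 + r)\<^sup>2"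
  have r: "r > 0" and D: "D > 0" using z0 by (simp_all add: r_def D_def add_pos_nonneg)
  have "1 + 2 * r / D \<le> growth_rate z" if z: "z \<in> cball z0 r" for z
  proof -
    have "cmod z \<le> cmod z0 + r"
      using z norm_triangle_ineq2[of z z0] by (simp add: dist_norm norm_minus_commute)
    then have "1 + (cmod z)\<^sup>2 \<le> D" unfolding D_def by (simp add: power_mono)
    then have qz: "1 / D \<le> q z" unfolding q_def by (intro divide_left_mono) (auto simp: D add_pos_nonneg)
    have Imz: "2 * r \<le> - 2 * Im z"
      using Im_cball_lower_half[OF z0 z[unfolded r_def]] unfolding r_def by linarith
    have "0 \<le> - 2 * Im z" using Imz r by linarith
    then have "2 * r * (1 / D) \<le> - 2 * Im z * q z"
      using mult_mono[OF Imz qz] D by simp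
    then show ?thesis by (simp add: growth_rate_def)
  qed
  moreover have "1 + 2 * r / D > 1" using r D by simp
  ultimately show ?thesis unfolding r_def[symmetric] by blast
qed

locale dirac_system =
  fixes C :: "nat \<Rightarrow> complex ^ ('a::finite + 'b::finite) ^ ('a + 'b)"
  assumes pos_def_C: "\<And>k. pos_def (C k)"
    and C_jmat_C: "\<And>k. C k ** jmat ** C k = jmat"
begin

lemma hermitian_C: "hermitian (C k)"
  using pos_def_C[of k] by (simp add: pos_def_def)

definition scaled_jform :: "complex \<Rightarrow> nat \<Rightarrow> complex ^ ('a + 'b) \<Rightarrow> real" where
  "scaled_jform z n x = q z ^ n * jform (W C z n *v x)"

definition scaled_cform :: "complex \<Rightarrow> nat \<Rightarrow> complex ^ ('a + 'b) \<Rightarrow> real" where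
  "scaled_cform z n x = q z ^ n * Re (cinner (W C z n *v x) (C n *v (W C z n *v x)))"

lemma scaled_cform_nonneg: "scaled_cform z n x \<ge> 0"
  unfolding scaled_cform_def using q_pos[of z] pos_def_cinner_nonneg[OF pos_def_C] by simp

lemma scaled_jform_le_cform: "scaled_jform z n x \<le> scaled_cform z n x"
  unfolding scaled_jform_def scaled_cform_def using q_pos[of z] jform_le_cinner[OF pos_def_C C_jmat_C]
  by (simp add: mult_left_mono)

lemma scaled_jform_Suc:
  "scaled_jform z (Suc n) x = scaled_jform z n x - 2 * Im z * q z * scaled_cform z n x"
proof -
  define y where "y = W C z n *v x"
  have "W C z (Suc n) *v x = (mat 1 + mat (\<i> * z) ** jmat ** C n) *v y"
    by (simp add: y_def matrix_vector_mul_assoc)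
  then have "jform (W C z (Suc n) *v x)
      = (1 + (cmod z)\<^sup>2) * jform y - 2 * Im z * Re (cinner y (C n *v y))"
    by (simp add: jform_step[OF hermitian_C C_jmat_C])
  then have "scaled_jform z (Suc n) x
      = q z * q z ^ n * ((1 + (cmod z)\<^sup>2) * jform y - 2 * Im z * Re (cinner y (C n *v y)))"
    by (simp only: scaled_jform_def power_Suc)
  also have "\<dots> = q z ^ n * (q z * (1 + (cmod z)\<^sup>2)) * jform y
      - 2 * Im z * q z * (q z ^ n * Re (cinner y (C n *v y)))"
    by (simp add: algebra_simps)
  finally show ?thesis by (simp add: q_mult_eq_1 scaled_jform_def scaled_cform_def y_def)
qed

lemma scaled_jform_eq_sum:
  "scaled_jform z n x = jform x - 2 * Im z * q z * (\<Sum>k<n. scaled_cform z k x)"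
  by (induction n) (simp_all add: scaled_jform_def[of z 0] scaled_jform_Suc algebra_simps)

lemma scaled_jform_mono:
  assumes "Im z \<le> 0" and "k \<le> n"
  shows "scaled_jform z k x \<le> scaled_jform z n x"
  using assms(2)
proof (induction n rule: dec_induct)
  case (step m)
  have "0 \<le> - 2 * Im z * q z * scaled_cform z m x"
    using assms(1) q_pos[of z] scaled_cform_nonneg[of z m x] by (simp add: mult_nonpos_nonneg)
  with step.IH show ?case by (simp add: scaled_jform_Suc)
qed simp

text \<open>Since \<open>C\<^sub>n \<ge> j\<close>, each step multiplies \<open>scaled_jform\<close> by at least \<open>growth_rate z\<close>.\<close>
lemma scaled_jform_growth:
  assumes "Im z \<le> 0"
  shows "growth_rate z ^ n * jform x \<le> scaled_jform z n x"
proof (induction n)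
  case 0
  then show ?case by (simp add: scaled_jform_def)
next
  case (Suc n)
  have g: "- 2 * Im z * q z \<ge> 0" using assms q_pos[of z] by (simp add: mult_nonpos_nonneg)
  then have "growth_rate z * scaled_jform z n x \<le> scaled_jform z (Suc n) x"
    using mult_left_mono[OF scaled_jform_le_cform g, of z n x]
    by (simp add: scaled_jform_Suc growth_rate_def algebra_simps)
  moreover have "growth_rate z * (growth_rate z ^ n * jform x) \<le> growth_rate z * scaled_jform z n x"
    using Suc g by (intro mult_left_mono) (auto simp: growth_rate_def)
  ultimately show ?case by simp
qed

lemma scaled_cform_diff:
  "scaled_cform z n (x - y) \<le> 2 * scaled_cform z n x + 2 * scaled_cform z n y"
proof -
  define Q where "Q = (\<lambda>v. Re (cinner v (C n *v v)))"
  define x' y' where "x' = W C z n *v x" and "y' = W C z n *v y"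
  have "Q (x' + y') + Q (x' - y') = 2 * Q x' + 2 * Q y'"
    unfolding Q_def using arg_cong[OF cinner_parallelogram, of Re] by simp
  moreover have "Q (x' + y') \<ge> 0" unfolding Q_def by (rule pos_def_cinner_nonneg[OF pos_def_C])
  ultimately have "q z ^ n * Q (x' - y') \<le> q z ^ n * (2 * Q x' + 2 * Q y')"
    using q_pos[of z] by (intro mult_left_mono) auto
  then show ?thesis
    by (simp add: scaled_cform_def Q_def x'_def y'_def matrix_vector_mult_diff_distrib algebra_simps)
qed

subsection \<open>Contractivity and uniqueness of Weyl functions\<close>

definition weyl_term :: "complex \<Rightarrow> complex ^ 'c ^ ('a + 'b) \<Rightarrow> nat \<Rightarrow> complex ^ 'c ^ 'c" where
  "weyl_term z X k = q z ^ k *\<^sub>R (adj X ** adj (W C z k) ** C k ** W C z k ** X)"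

lemma qform_weyl_term: "qform (weyl_term z X k) v = of_real (scaled_cform z k (X *v v))"
  using hermitian_cinner_Im[OF hermitian_C, of "W C z k *v (X *v v)" k]
  by (simp add: weyl_term_def qform_scaleR qform_sandwich scaled_cform_def complex_eq_iff)

lemma summable_weyl_term_iff:
  "summable (weyl_term z X) \<longleftrightarrow> (\<forall>v. summable (\<lambda>k. scaled_cform z k (X *v v)))"
proof
  assume "summable (weyl_term z X)"
  then have "summable (\<lambda>k. qform (weyl_term z X k) v)" for v by (rule summable_qform)
  then show "\<forall>v. summable (\<lambda>k. scaled_cform z k (X *v v))"
    by (simp add: qform_weyl_term summable_complex_of_real)
next
  assume "\<forall>v. summable (\<lambda>k. scaled_cform z k (X *v v))"
  then show "summable (weyl_term z X)"
    by (intro summable_qform_imp_summable) (simp add: qform_weyl_term summable_complex_of_real)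
qed

lemma is_weyl_iff:
  "is_weyl C \<phi> \<longleftrightarrow>
     (\<forall>z\<in>lower_half_plane. \<forall>v. summable (\<lambda>k. scaled_cform z k (stack_id (\<phi> z) *v v)))"
  by (simp add: is_weyl_def weyl_term_def[symmetric] summable_weyl_term_iff)

text \<open>Otherwise \<open>scaled_jform\<close> would grow geometrically, while the sum bounds it.\<close>
lemma jform_nonpos_if_summable:
  assumes z: "Im z < 0" and summable: "summable (\<lambda>k. scaled_cform z k x)"
  shows "jform x \<le> 0"
proof (rule ccontr)
  assume "\<not> jform x \<le> 0"
  then have pos: "jform x > 0" by simp
  define B where "B = jform x - 2 * Im z * q z * suminf (\<lambda>k. scaled_cform z k x)"
  have g: "- 2 * Im z * q z \<ge> 0" using z q_pos[of z] by (simp add: mult_nonpos_nonneg)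
  have bounded: "scaled_jform z n x \<le> B" for n
  proof -
    have "(\<Sum>k<n. scaled_cform z k x) \<le> suminf (\<lambda>k. scaled_cform z k x)"
      by (rule sum_le_suminf[OF summable]) (auto simp: scaled_cform_nonneg)
    then show ?thesis
      using mult_left_mono[OF _ g] by (simp add: scaled_jform_eq_sum B_def)
  qed
  obtain n where "B / jform x < growth_rate z ^ n"
    using real_arch_pow[OF growth_rate_gt_1[OF z]] by blast
  then have "B < growth_rate z ^ n * jform x" using pos by (simp add: divide_less_eq)
  with bounded[of n] scaled_jform_growth[of z n x] z show False by linarith
qed

lemma weyl_contractive:
  assumes "is_weyl C \<psi>" and "z \<in> lower_half_plane"
  shows "loewner_le (adj (\<psi> z) ** \<psi> z) (mat 1)"
  using assms(1)[unfolded is_weyl_iff] assms(2)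
  by (auto simp: lower_half_plane_def intro: contractive_if_jform_stack_id_nonpos jform_nonpos_if_summable)

lemma weyl_unique:
  assumes \<phi>: "is_weyl C \<phi>" and \<psi>: "is_weyl C \<psi>" and z: "z \<in> lower_half_plane"
  shows "\<psi> z = \<phi> z"
proof -
  have "\<phi> z *v v = \<psi> z *v v" for v
  proof -
    define x y where "x = stack_id (\<phi> z) *v v" and "y = stack_id (\<psi> z) *v v"
    have "summable (\<lambda>k. scaled_cform z k x)" "summable (\<lambda>k. scaled_cform z k y)"
      using \<phi> \<psi> z by (simp_all add: is_weyl_iff x_def y_def)
    then have "summable (\<lambda>k. 2 * scaled_cform z k x + 2 * scaled_cform z k y)"
      by (intro summable_add summable_mult)
    moreover have "norm (scaled_cform z k (x - y)) \<le> 2 * scaled_cform z k x + 2 * scaled_cform z k y" for k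
      using scaled_cform_diff[of z k x y] scaled_cform_nonneg[of z k "x - y"] by simp
    ultimately have "summable (\<lambda>k. scaled_cform z k (x - y))"
      by (rule summable_comparison_test')
    then have "jform (x - y) \<le> 0"
      using z by (intro jform_nonpos_if_summable) (simp_all add: lower_half_plane_def)
    moreover have "jform (x - y) = (norm (\<phi> z *v v - \<psi> z *v v))\<^sup>2"
      by (simp add: jform_eq x_def y_def stack_id_mult_vec_Inl stack_id_mult_vec_Inr norm_vec_power2)
    ultimately show ?thesis by simp
  qed
  then show ?thesis by (simp add: matrix_eq)
qed

subsection \<open>Weyl discs\<close>

definition in_weyl_disc :: "complex \<Rightarrow> nat \<Rightarrow> complex ^ 'b ^ 'a \<Rightarrow> bool" where
  "in_weyl_disc z n P \<longleftrightarrow> (\<forall>v. scaled_jform z n (stack_id P *v v) \<le> 0)"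

lemma in_weyl_disc_antimono:
  "Im z \<le> 0 \<Longrightarrow> k \<le> n \<Longrightarrow> in_weyl_disc z n P \<Longrightarrow> in_weyl_disc z k P"
  unfolding in_weyl_disc_def using scaled_jform_mono by (meson order_trans)

lemma in_weyl_disc_sum_bound:
  assumes "in_weyl_disc z n P"
  shows "- 2 * Im z * q z * (\<Sum>k<n. scaled_cform z k (stack_id P *v v)) \<le> (norm v)\<^sup>2"
proof -
  have "(norm (P *v v))\<^sup>2 - (norm v)\<^sup>2 - 2 * Im z * q z * (\<Sum>k<n. scaled_cform z k (stack_id P *v v)) \<le> 0"
    using assms by (simp add: in_weyl_disc_def scaled_jform_eq_sum jform_stack_id)
  then show ?thesis using zero_le_power2[of "norm (P *v v)"] by linarith
qed

text \<open>For the difference of the two stacked vectors, \<open>scaled_jform\<close> stays bounded by the sum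
  bounds of both points, yet grows like \<open>growth_rate z ^ n\<close> times \<open>\<parallel>(P - P') v\<parallel>\<^sup>2\<close>.\<close>
lemma weyl_disc_diameter:
  assumes z: "Im z < 0" and P: "in_weyl_disc z n P" and P': "in_weyl_disc z n P'"
  shows "(growth_rate z ^ n - 1) * (norm ((P - P') *v v))\<^sup>2 \<le> 4 * (norm v)\<^sup>2"
proof -
  define g x x' where "g = - 2 * Im z * q z"
    and "x = stack_id P *v v" and "x' = stack_id P' *v v"
  have g: "g \<ge> 0" unfolding g_def using z q_pos[of z] by (simp add: mult_nonpos_nonneg)
  have "(\<Sum>k<n. scaled_cform z k (x - x'))
      \<le> 2 * (\<Sum>k<n. scaled_cform z k x) + 2 * (\<Sum>k<n. scaled_cform z k x')"
    using sum_mono[of "{..<n}", OF scaled_cform_diff] by (simp add: sum.distrib sum_distrib_left)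
  from mult_left_mono[OF this g] have "g * (\<Sum>k<n. scaled_cform z k (x - x'))
      \<le> 2 * (g * (\<Sum>k<n. scaled_cform z k x)) + 2 * (g * (\<Sum>k<n. scaled_cform z k x'))"
    by (simp add: algebra_simps)
  also have "\<dots> \<le> 4 * (norm v)\<^sup>2"
    using in_weyl_disc_sum_bound[OF P, of v] in_weyl_disc_sum_bound[OF P', of v]
    by (simp add: g_def x_def x'_def)
  finally have "scaled_jform z n (x - x') \<le> jform (x - x') + 4 * (norm v)\<^sup>2"
    by (simp add: scaled_jform_eq_sum g_def)
  moreover have "jform (x - x') = (norm ((P - P') *v v))\<^sup>2"
    by (simp add: jform_eq x_def x'_def stack_id_mult_vec_Inl stack_id_mult_vec_Inr
        norm_vec_power2 matrix_vector_mult_diff_rdistrib)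
  moreover have "growth_rate z ^ n * jform (x - x') \<le> scaled_jform z n (x - x')"
    using z by (intro scaled_jform_growth) simp
  ultimately show ?thesis by (simp add: algebra_simps)
qed

lemma weyl_disc_entry_diameter:
  assumes z: "Im z < 0" and "in_weyl_disc z n P" and "in_weyl_disc z n P'"
  shows "(growth_rate z ^ n - 1) * (cmod (P $ a $ b - P' $ a $ b))\<^sup>2 \<le> 4"
proof -
  have "growth_rate z ^ n - 1 \<ge> 0" using growth_rate_gt_1[OF z] by (simp add: one_le_power)
  then have "(growth_rate z ^ n - 1) * (cmod ((P - P') $ a $ b))\<^sup>2
      \<le> (growth_rate z ^ n - 1) * (norm ((P - P') *v axis b 1))\<^sup>2"
    by (intro mult_left_mono power_mono norm_entry_le) auto
  also have "\<dots> \<le> 4" using weyl_disc_diameter[OF assms, of "axis b 1"] by simp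
  finally show ?thesis by simp
qed

subsection \<open>Rational points in the Weyl discs\<close>

text \<open>\<open>Winv z n = (1 + z\<^sup>2)\<^sup>n W\<^sub>n(z)\<^sup>-\<^sup>1\<close>, a polynomial in \<open>z\<close> (see \<open>W_mult_Winv\<close>).\<close>
primrec Winv :: "complex \<Rightarrow> nat \<Rightarrow> complex ^ ('a + 'b) ^ ('a + 'b)" where
  "Winv z 0 = mat 1"
| "Winv z (Suc n) = Winv z n ** (mat 1 + mat (\<i> * (- z)) ** jmat ** C n)"

lemma W_mult_Winv: "W C z n *v (Winv z n *v x) = (1 + z\<^sup>2) ^ n *s x"
proof (induction n arbitrary: x)
  case (Suc n)
  let ?S = "\<lambda>c. mat 1 + mat c ** jmat ** C n"
  have "W C z (Suc n) *v (Winv z (Suc n) *v x) = ?S (\<i> * z) *v (W C z n *v (Winv z n *v (?S (- (\<i> * z)) *v x)))"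
    by (simp add: matrix_vector_mul_assoc matrix_mul_assoc)
  also have "\<dots> = (1 + z\<^sup>2) ^ n *s ((1 - (\<i> * z)\<^sup>2) *s x)"
    by (simp add: Suc.IH vector_scalar_commute step_matrix_inverse[OF C_jmat_C])
  also have "\<dots> = (1 + z\<^sup>2) ^ Suc n *s x"
    by (simp add: vec_eq_iff power2_eq_square algebra_simps)
  finally show ?case .
qed (simp add: vec_eq_iff)

lemma jform_Winv:
  assumes z: "Im z \<le> 0"
  shows "jform (Winv z n *v x) \<le> (1 + (cmod z)\<^sup>2) ^ n * jform x"
proof (induction n arbitrary: x)
  case (Suc n)
  define y where "y = (mat 1 + mat (\<i> * (- z)) ** jmat ** C n) *v x"
  have "jform y = (1 + (cmod z)\<^sup>2) * jform x + 2 * Im z * Re (cinner x (C n *v x))"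
    using jform_step[OF hermitian_C C_jmat_C, where w = "- z" and x = x] by (simp add: y_def)
  moreover have "2 * Im z * Re (cinner x (C n *v x)) \<le> 0"
    using z pos_def_cinner_nonneg[OF pos_def_C[of n], of x] by (simp add: mult_nonpos_nonneg)
  ultimately have step: "jform y \<le> (1 + (cmod z)\<^sup>2) * jform x" by simp
  have "jform (Winv z (Suc n) *v x) = jform (Winv z n *v y)"
    by (simp add: y_def matrix_vector_mul_assoc)
  also have "\<dots> \<le> (1 + (cmod z)\<^sup>2) ^ n * jform y" by (rule Suc.IH)
  also have "\<dots> \<le> (1 + (cmod z)\<^sup>2) ^ n * ((1 + (cmod z)\<^sup>2) * jform x)"
    using step by (intro mult_left_mono) auto
  finally show ?case by (simp add: ac_simps)
qed simp

definition embed_lower :: "complex ^ 'b \<Rightarrow> complex ^ ('a + 'b)" where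
  "embed_lower u = (\<chi> i. case i of Inl a \<Rightarrow> 0 | Inr b \<Rightarrow> u $ b)"

definition Winv_upper :: "complex \<Rightarrow> nat \<Rightarrow> complex ^ 'b ^ 'a" where
  "Winv_upper z n = (\<chi> a c. Winv z n $ Inl a $ Inr c)"

definition Winv_lower :: "complex \<Rightarrow> nat \<Rightarrow> complex ^ 'b ^ 'b" where
  "Winv_lower z n = (\<chi> b c. Winv z n $ Inr b $ Inr c)"

lemma jform_embed_lower: "jform (embed_lower u) = - (norm u)\<^sup>2"
  by (simp add: jform_eq embed_lower_def norm_vec_power2)

lemma Winv_embed_lower_Inl: "(Winv z n *v embed_lower u) $ Inl a = (Winv_upper z n *v u) $ a"
  by (simp add: matrix_vector_mult_def sum_UNIV_Plus embed_lower_def Winv_upper_def)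

lemma Winv_embed_lower_Inr: "(Winv z n *v embed_lower u) $ Inr b = (Winv_lower z n *v u) $ b"
  by (simp add: matrix_vector_mult_def sum_UNIV_Plus embed_lower_def Winv_lower_def)

text \<open>A kernel vector \<open>u\<close> would give \<open>Winv z n *v embed_lower u\<close> a nonnegative \<open>j\<close>-form,
  although \<open>jform_Winv\<close> bounds it by \<open>-(1 + |z|\<^sup>2)\<^sup>n \<parallel>u\<parallel>\<^sup>2\<close>.\<close>
lemma invertible_Winv_lower:
  assumes z: "Im z \<le> 0"
  shows "invertible (Winv_lower z n)"
proof -
  have kernel: "u = 0" if "Winv_lower z n *v u = 0" for u
  proof -
    have "jform (Winv z n *v embed_lower u) = (norm (Winv_upper z n *v u))\<^sup>2"
      by (simp add: jform_eq Winv_embed_lower_Inl Winv_embed_lower_Inr that norm_vec_power2)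
    then have "(norm (Winv_upper z n *v u))\<^sup>2 \<le> - ((1 + (cmod z)\<^sup>2) ^ n * (norm u)\<^sup>2)"
      using jform_Winv[OF z, of n "embed_lower u"] by (simp add: jform_embed_lower)
    then have "(1 + (cmod z)\<^sup>2) ^ n * (norm u)\<^sup>2 \<le> 0"
      using zero_le_power2[of "norm (Winv_upper z n *v u)"] by linarith
    moreover have "(1 + (cmod z)\<^sup>2) ^ n > 0" by (simp add: add_pos_nonneg)
    ultimately show "u = 0" by (simp add: mult_le_0_iff)
  qed
  have "inj ((*v) (Winv_lower z n))"
  proof (rule injI)
    fix x y
    assume "Winv_lower z n *v x = Winv_lower z n *v y"
    then have "Winv_lower z n *v (x - y) = 0" by (simp add: matrix_vector_mult_diff_distrib)
    then show "x = y" using kernel[of "x - y"] by simp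
  qed
  then have "det (Winv_lower z n) \<noteq> 0"
    using det_nz_iff_inj_gen[OF matrix_vector_mul_linear_gen, of "Winv_lower z n"] by simp
  then show ?thesis by (simp add: invertible_det_nz)
qed

definition weyl_approx :: "complex \<Rightarrow> nat \<Rightarrow> complex ^ 'b ^ 'a" where
  "weyl_approx z n = Winv_upper z n ** matrix_inv (Winv_lower z n)"

lemma stack_id_weyl_approx:
  assumes z: "Im z \<le> 0"
  shows "stack_id (weyl_approx z n) *v w = Winv z n *v embed_lower (matrix_inv (Winv_lower z n) *v w)"
proof -
  have "(stack_id (weyl_approx z n) *v w) $ i = (Winv z n *v embed_lower (matrix_inv (Winv_lower z n) *v w)) $ i"
    for i
    by (cases i) (simp_all add: stack_id_mult_vec_Inl stack_id_mult_vec_Inr Winv_embed_lower_Inl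
        Winv_embed_lower_Inr weyl_approx_def matrix_vector_mul_assoc
        matrix_inv_right[OF invertible_Winv_lower[OF z]])
  then show ?thesis by (simp add: vec_eq_iff)
qed

lemma weyl_approx_in_disc:
  assumes z: "Im z \<le> 0"
  shows "in_weyl_disc z n (weyl_approx z n)"
  unfolding in_weyl_disc_def
proof
  fix w
  have "scaled_jform z n (stack_id (weyl_approx z n) *v w)
      = - (q z ^ n * (cmod ((1 + z\<^sup>2) ^ n))\<^sup>2 * (norm (matrix_inv (Winv_lower z n) *v w))\<^sup>2)"
    by (simp add: scaled_jform_def stack_id_weyl_approx[OF z] W_mult_Winv jform_scale jform_embed_lower)
  also have "\<dots> \<le> 0" using q_pos[of z] by simp
  finally show "scaled_jform z n (stack_id (weyl_approx z n) *v w) \<le> 0" .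
qed

lemma analytic_Winv: "(\<lambda>z. Winv z n $ i $ j) analytic_on S"
proof (induction n arbitrary: i j)
  case (Suc n)
  have "(\<lambda>z. mat (\<i> * (- z)) $ i $ j) analytic_on S" for i j :: "'a + 'b"
    by (cases "i = j") (simp_all add: mat_def analytic_intros)
  then have "(\<lambda>z. (mat 1 + mat (\<i> * (- z)) ** jmat ** C n) $ i $ j) analytic_on S" for i j
    by (simp add: analytic_intros analytic_on_matrix_mult)
  with Suc show ?case by (simp only: Winv.simps) (intro analytic_on_matrix_mult)
qed simp

lemma analytic_weyl_approx: "(\<lambda>z. weyl_approx z n $ a $ b) analytic_on lower_half_plane"
proof -
  have open_S: "open lower_half_plane"
    unfolding lower_half_plane_def by (rule open_halfspace_Im_lt)
  have inv: "invertible (Winv_lower z n)" if "z \<in> lower_half_plane" for z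
    using that invertible_Winv_lower by (simp add: lower_half_plane_def)
  have "(\<lambda>z. Winv_lower z n $ i $ j) analytic_on S" for i j S
    by (simp add: Winv_lower_def analytic_Winv)
  then have "(\<lambda>z. matrix_inv (Winv_lower z n) $ c $ b) analytic_on lower_half_plane" for c
    by (rule analytic_on_right_inverse[where G = "\<lambda>z. Winv_lower z n", OF _ _ _ open_S])
      (simp_all add: inv matrix_inv_right flip: invertible_det_nz)
  then show ?thesis
    unfolding weyl_approx_def matrix_matrix_mult_def vec_lambda_beta
    by (intro analytic_on_sum analytic_on_mult) (simp_all add: Winv_upper_def analytic_Winv)
qed

subsection \<open>The Weyl function\<close>

lemma weyl_approx_uniformly_Cauchy:
  assumes z0: "Im z0 < 0"
  shows "uniformly_Cauchy_on (cball z0 (- Im z0 / 2)) (\<lambda>n z. weyl_approx z n $ a $ b)"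
  unfolding uniformly_Cauchy_on_def
proof (intro allI impI)
  fix e :: real
  assume e: "e > 0"
  obtain c where c: "c > 1" and c_le: "\<And>z. z \<in> cball z0 (- Im z0 / 2) \<Longrightarrow> c \<le> growth_rate z"
    using growth_rate_uniformly_gt_1[OF z0] by blast
  obtain N where N: "1 + 4 / e\<^sup>2 < c ^ N" using real_arch_pow[OF c] by blast
  have "dist (weyl_approx z m $ a $ b) (weyl_approx z n $ a $ b) < e"
    if z: "z \<in> cball z0 (- Im z0 / 2)" and "N \<le> m" "N \<le> n" for z m n
  proof -
    define p d where "p = min m n" and "d = cmod (weyl_approx z m $ a $ b - weyl_approx z n $ a $ b)"
    have zi: "Im z < 0" using cball_subset_lower_half_plane[OF z0] z by (auto simp: lower_half_plane_def)
    have "in_weyl_disc z p (weyl_approx z m)"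
      using in_weyl_disc_antimono[of z p m] weyl_approx_in_disc[of z m] zi by (simp add: p_def)
    moreover have "in_weyl_disc z p (weyl_approx z n)"
      using in_weyl_disc_antimono[of z p n] weyl_approx_in_disc[of z n] zi by (simp add: p_def)
    ultimately have bound: "(growth_rate z ^ p - 1) * d\<^sup>2 \<le> 4"
      unfolding d_def by (rule weyl_disc_entry_diameter[OF zi])
    have "c ^ N \<le> c ^ p" using c \<open>N \<le> m\<close> \<open>N \<le> n\<close> by (simp add: p_def power_increasing)
    also have "\<dots> \<le> growth_rate z ^ p" using c c_le[OF z] by (simp add: power_mono)
    finally have "c ^ N \<le> growth_rate z ^ p" .
    then have large: "4 / e\<^sup>2 < growth_rate z ^ p - 1" using N by linarith
    then have e_large: "4 < (growth_rate z ^ p - 1) * e\<^sup>2" using e by (simp add: divide_less_eq)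
    have "0 < 4 / e\<^sup>2" using e by simp
    with large have G: "0 < growth_rate z ^ p - 1" by linarith
    have "d\<^sup>2 \<le> 4 / (growth_rate z ^ p - 1)"
      using bound G by (simp add: pos_le_divide_eq mult.commute)
    also have "\<dots> < e\<^sup>2" using e_large by (simp add: pos_divide_less_eq[OF G] mult.commute)
    finally have "d\<^sup>2 < e\<^sup>2" .
    then show ?thesis using e by (simp add: d_def dist_norm power_less_imp_less_base)
  qed
  then show "\<exists>M. \<forall>z\<in>cball z0 (- Im z0 / 2). \<forall>m\<ge>M. \<forall>n\<ge>M.
      dist (weyl_approx z m $ a $ b) (weyl_approx z n $ a $ b) < e"
    by blast
qed

definition weyl_fun :: "complex \<Rightarrow> complex ^ 'b ^ 'a" where
  "weyl_fun z = (\<chi> a b. lim (\<lambda>n. weyl_approx z n $ a $ b))"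

lemma weyl_approx_tendsto:
  assumes z: "z \<in> lower_half_plane"
  shows "(\<lambda>n. weyl_approx z n $ a $ b) \<longlonglongrightarrow> weyl_fun z $ a $ b"
proof -
  have zi: "Im z < 0" using z by (simp add: lower_half_plane_def)
  have "z \<in> cball z (- Im z / 2)" using zi by simp
  then have "Cauchy (\<lambda>n. weyl_approx z n $ a $ b)"
    using weyl_approx_uniformly_Cauchy[OF zi, of a b]
    unfolding uniformly_Cauchy_on_def Cauchy_def by blast
  then show ?thesis by (simp add: weyl_fun_def Cauchy_convergent_iff convergent_LIMSEQ_iff)
qed

lemma analytic_weyl_fun: "(\<lambda>z. weyl_fun z $ a $ b) analytic_on lower_half_plane"
  unfolding analytic_on_def
proof
  fix z0
  assume "z0 \<in> lower_half_plane"
  then have z0: "Im z0 < 0" by (simp add: lower_half_plane_def)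
  define r where "r = - Im z0 / 2"
  have r: "r > 0" and sub: "cball z0 r \<subseteq> lower_half_plane"
    using z0 cball_subset_lower_half_plane[OF z0] by (simp_all add: r_def)
  obtain l where l: "uniform_limit (cball z0 r) (\<lambda>n z. weyl_approx z n $ a $ b) l sequentially"
    using Cauchy_uniformly_convergent[OF weyl_approx_uniformly_Cauchy[OF z0]]
    by (auto simp: uniformly_convergent_on_def r_def)
  have "l z = weyl_fun z $ a $ b" if "z \<in> cball z0 r" for z
    using LIMSEQ_unique[OF tendsto_uniform_limitI[OF l that] weyl_approx_tendsto] that sub by blast
  then have lim: "uniform_limit (cball z0 r) (\<lambda>n z. weyl_approx z n $ a $ b) (\<lambda>z. weyl_fun z $ a $ b) sequentially"
    using l uniform_limit_cong'[of "cball z0 r" "\<lambda>n z. weyl_approx z n $ a $ b"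
        "\<lambda>n z. weyl_approx z n $ a $ b" l "\<lambda>z. weyl_fun z $ a $ b"]
    by simp
  have hol: "(\<lambda>z. weyl_approx z n $ a $ b) holomorphic_on cball z0 r" for n
    using analytic_weyl_approx sub analytic_on_subset analytic_imp_holomorphic by blast
  have "\<forall>\<^sub>F n in sequentially. continuous_on (cball z0 r) (\<lambda>z. weyl_approx z n $ a $ b)
      \<and> (\<lambda>z. weyl_approx z n $ a $ b) holomorphic_on ball z0 r"
    using hol holomorphic_on_imp_continuous_on holomorphic_on_subset[OF hol] ball_subset_cball
    by (intro always_eventually) blast
  then obtain "(\<lambda>z. weyl_fun z $ a $ b) holomorphic_on ball z0 r"
    using holomorphic_uniform_limit[OF _ lim] by auto
  then show "\<exists>e>0. (\<lambda>z. weyl_fun z $ a $ b) holomorphic_on ball z0 e" using r by blast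
qed

lemma stack_id_weyl_approx_tendsto:
  assumes z: "z \<in> lower_half_plane"
  shows "(\<lambda>n. stack_id (weyl_approx z n) *v v) \<longlonglongrightarrow> stack_id (weyl_fun z) *v v"
proof (rule vec_tendstoI)
  fix i :: "'a + 'b"
  show "(\<lambda>n. (stack_id (weyl_approx z n) *v v) $ i) \<longlonglongrightarrow> (stack_id (weyl_fun z) *v v) $ i"
  proof (cases i)
    case (Inl a)
    show ?thesis unfolding Inl stack_id_mult_vec_Inl
      unfolding matrix_vector_mult_def vec_lambda_beta by (intro tendsto_intros weyl_approx_tendsto z)
  qed (simp add: stack_id_mult_vec_Inr)
qed

lemma weyl_fun_in_disc:
  assumes z: "z \<in> lower_half_plane"
  shows "in_weyl_disc z k (weyl_fun z)"
  unfolding in_weyl_disc_def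
proof
  fix v
  have "(\<lambda>n. scaled_jform z k (stack_id (weyl_approx z n) *v v)) \<longlonglongrightarrow> scaled_jform z k (stack_id (weyl_fun z) *v v)"
    unfolding scaled_jform_def
    by (intro tendsto_mult_left tendsto_jform tendsto_matrix_vector_mult stack_id_weyl_approx_tendsto z)
  moreover have "\<forall>n\<ge>k. scaled_jform z k (stack_id (weyl_approx z n) *v v) \<le> 0"
    using in_weyl_disc_antimono weyl_approx_in_disc z
    by (auto simp: in_weyl_disc_def lower_half_plane_def)
  ultimately show "scaled_jform z k (stack_id (weyl_fun z) *v v) \<le> 0"
    by (blast intro: LIMSEQ_le_const2)
qed

lemma is_weyl_weyl_fun: "is_weyl C weyl_fun"
  unfolding is_weyl_iff
proof (intro ballI allI summableI_nonneg_bounded)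
  fix z v n
  assume "z \<in> lower_half_plane"
  then have g: "- 2 * Im z * q z > 0"
    using q_pos[of z] by (simp add: lower_half_plane_def mult_neg_pos)
  have "- 2 * Im z * q z * (\<Sum>k<n. scaled_cform z k (stack_id (weyl_fun z) *v v)) \<le> (norm v)\<^sup>2"
    using \<open>z \<in> lower_half_plane\<close> by (intro in_weyl_disc_sum_bound weyl_fun_in_disc)
  then show "(\<Sum>k<n. scaled_cform z k (stack_id (weyl_fun z) *v v)) \<le> (norm v)\<^sup>2 / (- 2 * Im z * q z)"
    by (simp only: pos_le_divide_eq[OF g]) (simp add: algebra_simps)
qed (rule scaled_cform_nonneg)

end

theorem theorem2p2:
  fixes C :: "nat \<Rightarrow> complex ^ ('a::finite + 'b::finite) ^ ('a + 'b)"
  assumes "\<forall>k. pos_def (C k)"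
    and "\<forall>k. C k ** jmat ** C k = jmat"
  shows "\<exists>\<phi> :: complex \<Rightarrow> complex ^ 'b ^ 'a.
           is_weyl C \<phi>
         \<and> (\<forall>\<psi>. is_weyl C \<psi> \<longrightarrow> (\<forall>z \<in> lower_half_plane. \<psi> z = \<phi> z))
         \<and> (\<forall>i j. (\<lambda>z. \<phi> z $ i $ j) analytic_on lower_half_plane)
         \<and> (\<forall>z \<in> lower_half_plane. loewner_le (adj (\<phi> z) ** \<phi> z) (mat 1))"
proof -
  interpret dirac_system C using assms by unfold_locales auto
  show ?thesis
    using is_weyl_weyl_fun weyl_unique analytic_weyl_fun weyl_contractive by blast
qed

end
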